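(* Let $(\mathbf{A},E,D)$ be a scheme on $P$ compute nodes with gradient dimension $d\ge 1$, and let $s\ge 0$ be an integer. If $(\mathbf{A},E,D)$ tolerates $s$ adversarial nodes, then its redundancy ratio satisfies $r\ge 2s+1$, i.e. $\|\mathbf{A}\|_0\ge (2s+1)P$.
   Context: Fix integers $P\ge 1$ (number of compute nodes) and $d\ge 1$. A scheme is a triple $(\mathbf{A},E,D)$ where $\mathbf{A}\in\{0,1\}^{P\times P}$ is an allocation matrix ($\mathbf{A}_{j,k}=1$ means node $j$ is assigned gradient $k$), $E=(E_1,\dots,E_P)$ with each $E_j:\mathbb{R}^{d\times P}\to\mathbb{R}^d$ an arbitrary function (encoder of node $j$), and $D:\mathbb{R}^{d\times P}\to\mathbb{R}^d$ an arbitrary function (decoder). For $\mathbf{G}=[\mathbf{g}_1,\dots,\mathbf{g}_P]\in\mathbb{R}^{d\times P}$, let $\mathbf{Y}_j=(\mathbf{1}_d\mathbf{A}_{j,\cdot})\odot\mathbf{G}$ (the $d\times P$ matrix whose $k$-th column is $\mathbf{g}_k$ if $\mathbf{A}_{j,k}=1$ and $\mathbf{0}_d$ otherwise; $\odot$ is the entrywise product, $\mathbf{1}_d$ the all-ones column vector), $\mathbf{z}_j=E_j(\mathbf{Y}_j)$, and $\mathbf{Z}^{\mathbf{A},E,\mathbf{G}}=[\mathbf{z}_1,\dots,\mathbf{z}_P]\in\mathbb{R}^{d\times P}$. The scheme tolerates $s$ adversarial nodes if for every $\mathbf{G}\in\mathbb{R}^{d\times P}$ and every $\mathbf{N}\in\mathbb{R}^{d\times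 P}$ with at most $s$ nonzero columns, $D(\mathbf{Z}^{\mathbf{A},E,\mathbf{G}}+\mathbf{N})=\mathbf{G}\mathbf{1}_P$. The redundancy ratio is $r=\frac1P\|\mathbf{A}\|_0$, where $\|\mathbf{A}\|_0$ is the number of nonzero entries of $\mathbf{A}$. *)

theory Defs
  imports "HOL-Analysis.Analysis"
begin

text \<open>Matrices in R^{d x P} are rendered as real^'p^'d (rows indexed by 'd, columns by 'p),
  so d = CARD('d) >= 1 and P = CARD('p) >= 1. The allocation matrix is real^'p^'p
  with entries in {0,1}.\<close>

definition node_input :: "real^'p^'p \<Rightarrow> 'p \<Rightarrow> real^'p^'d \<Rightarrow> real^'p^'d" where
  "node_input A j G = (\<chi> i k. A$j$k * G$i$k)"

definition coded_matrix ::
  "real^'p^'p \<Rightarrow> ('p \<Rightarrow> real^'p^'d \<Rightarrow> real^'d) \<Rightarrow> real^'p^'d \<Rightarrow> real^'p^'d" where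
  "coded_matrix A E G = (\<chi> i j. (E j (node_input A j G))$i)"

definition num_nonzero_columns :: "real^'p^'d \<Rightarrow> nat" where
  "num_nonzero_columns N = card {k. column k N \<noteq> 0}"

definition tolerates ::
  "real^'p^'p \<Rightarrow> ('p \<Rightarrow> real^'p^'d \<Rightarrow> real^'d) \<Rightarrow> (real^'p^'d \<Rightarrow> real^'d) \<Rightarrow> nat \<Rightarrow> bool" where
  "tolerates A E D s \<longleftrightarrow>
     (\<forall>G N. num_nonzero_columns N \<le> s \<longrightarrow> D (coded_matrix A E G + N) = G *v vec 1)"

definition l0_norm :: "real^'p^'p \<Rightarrow> nat" where
  "l0_norm A = card {(j,k). A$j$k \<noteq> 0}"

end

theory Submission
  imports Defs
begin

text \<open>Gradient k is only seen by the nodes j with A j k \<noteq> 0. If fewer than 2s+1 nodes hold it,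
  then the gradient matrices 0 and e_k (all-ones in column k) yield coded matrices that differ in at
  most 2s columns, so corrupting s of those columns in each brings both to the same received matrix,
  and the decoder cannot tell apart the different sums 0 and 1. Hence every column of A has at least
  2s+1 nonzero entries.\<close>

lemma num_nonzero_columns_le_card:
  fixes N :: "real^'p^'d"
  assumes "\<And>i j. j \<notin> T \<Longrightarrow> N$i$j = 0"
  shows "num_nonzero_columns N \<le> card T"
  unfolding num_nonzero_columns_def
  by (rule card_mono) (use assms in \<open>auto simp: column_def vec_eq_iff\<close>)

lemma split_card_le_double:
  assumes "finite S" "card S \<le> 2 * s"
  obtains S1 where "S1 \<subseteq> S" "card S1 \<le> s" "card (S - S1) \<le> s"
proof (cases "s \<le> card S")
  case True
  then obtain T where T: "T \<subseteq> S" "card T = s" by (meson obtain_subset_with_card_n)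
  with assms have "card (S - T) \<le> s" by (simp add: card_Diff_subset finite_subset)
  with T that show ?thesis by simp
next
  case False
  with that[of S] show ?thesis by simp
qed

lemma common_corruption_if_columns_differ_le_double:
  fixes Z Z' :: "real^'p^'d"
  assumes agree: "\<And>i j. j \<notin> S \<Longrightarrow> Z$i$j = Z'$i$j"
    and card_S: "card S \<le> 2 * s"
  obtains N N' where "num_nonzero_columns N \<le> s" "num_nonzero_columns N' \<le> s" "Z + N = Z' + N'"
proof -
  obtain S1 where S1: "S1 \<subseteq> S" "card S1 \<le> s" "card (S - S1) \<le> s"
    using split_card_le_double[OF finite card_S] .
  define N :: "real^'p^'d" where "N = (\<chi> i j. if j \<in> S1 then Z'$i$j - Z$i$j else 0)"
  define N' :: "real^'p^'d" where "N' = (\<chi> i j. if j \<in> S - S1 then Z$i$j - Z'$i$j else 0)"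
  have "num_nonzero_columns N \<le> card S1"
    by (rule num_nonzero_columns_le_card) (simp add: N_def)
  with S1(2) have "num_nonzero_columns N \<le> s" by simp
  moreover have "num_nonzero_columns N' \<le> card (S - S1)"
    by (rule num_nonzero_columns_le_card) (auto simp: N'_def)
  with S1(3) have "num_nonzero_columns N' \<le> s" by simp
  moreover have "Z + N = Z' + N'"
    using S1(1) agree by (auto simp: N_def N'_def vec_eq_iff)
  ultimately show ?thesis using that by blast
qed

lemma tolerates_sum_eq_if_columns_differ_le_double:
  assumes tol: "tolerates A E D s"
    and agree: "\<And>i j. j \<notin> S \<Longrightarrow> coded_matrix A E G $i$j = coded_matrix A E G' $i$j"
    and card_S: "card S \<le> 2 * s"
  shows "G *v vec 1 = G' *v vec 1"
proof -
  obtain N N' where "num_nonzero_columns N \<le> s" "num_nonzero_columns N' \<le> s"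
    and same_received: "coded_matrix A E G + N = coded_matrix A E G' + N'"
    using common_corruption_if_columns_differ_le_double[OF agree card_S] .
  with tol have "D (coded_matrix A E G + N) = G *v vec 1"
    and "D (coded_matrix A E G' + N') = G' *v vec 1"
    unfolding tolerates_def by blast+
  with same_received show ?thesis by simp
qed

lemma tolerates_imp_column_support_ge:
  fixes A :: "real^'p^'p"
    and E :: "'p \<Rightarrow> real^'p^'d \<Rightarrow> real^'d"
    and D :: "real^'p^'d \<Rightarrow> real^'d"
  assumes tol: "tolerates A E D s"
  shows "2 * s + 1 \<le> card {j. A$j$k \<noteq> 0}"
proof (rule ccontr)
  define S where "S = {j. A$j$k \<noteq> 0}"
  define G' :: "real^'p^'d" where "G' = (\<chi> i k'. if k' = k then 1 else 0)"
  assume "\<not> 2 * s + 1 \<le> card {j. A$j$k \<noteq> 0}"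
  then have card_S: "card S \<le> 2 * s" by (simp add: S_def)
  have "node_input A j 0 = node_input A j G'" if "j \<notin> S" for j
    using that by (auto simp: node_input_def G'_def S_def vec_eq_iff)
  then have "coded_matrix A E 0 $i$j = coded_matrix A E G' $i$j" if "j \<notin> S" for i j
    using that by (simp add: coded_matrix_def)
  then have "(0::real^'p^'d) *v vec 1 = G' *v vec 1"
    using tolerates_sum_eq_if_columns_differ_le_double[OF tol _ card_S] by blast
  moreover have "(G' *v vec 1) $ i = 1" for i
    by (simp add: G'_def matrix_vector_mult_def)
  moreover have "((0::real^'p^'d) *v vec 1) $ i = 0" for i
    by (simp add: matrix_vector_mult_def)
  ultimately show False by (metis zero_neq_one)
qed

lemma l0_norm_eq_sum_column_supports:
  fixes A :: "real^'p^'p"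
  shows "l0_norm A = (\<Sum>k\<in>UNIV. card {j. A$j$k \<noteq> 0})"
proof -
  have "{(j,k). A$j$k \<noteq> 0} = (\<lambda>(k,j). (j,k)) ` (SIGMA k:UNIV. {j. A$j$k \<noteq> 0})"
    by auto
  then have "l0_norm A = card (SIGMA k:UNIV. {j. A$j$k \<noteq> 0})"
    unfolding l0_norm_def by (simp add: card_image inj_on_def)
  also have "\<dots> = (\<Sum>k\<in>UNIV. card {j. A$j$k \<noteq> 0})"
    by (simp add: card_SigmaI)
  finally show ?thesis .
qed

theorem theorem1:
  fixes A :: "real^'p^'p"
    and E :: "'p \<Rightarrow> real^'p^'d \<Rightarrow> real^'d"
    and D :: "real^'p^'d \<Rightarrow> real^'d"
    and s :: nat
  assumes "\<forall>j k. A$j$k \<in> {0, 1}"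
    and "tolerates A E D s"
  shows "l0_norm A \<ge> (2 * s + 1) * CARD('p)"
proof -
  have "(2 * s + 1) * CARD('p) = (\<Sum>k\<in>(UNIV::'p set). 2 * s + 1)"
    by simp
  also have "\<dots> \<le> (\<Sum>k\<in>UNIV. card {j. A$j$k \<noteq> 0})"
    by (rule sum_mono) (rule tolerates_imp_column_support_ge[OF assms(2)])
  also have "\<dots> = l0_norm A"
    by (rule l0_norm_eq_sum_column_supports[symmetric])
  finally show ?thesis .
qed

end
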